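(* Let $G_1,G_2,\dots$ be probability generating functions of nonnegative integer-valued random variables with $\rho_i=G_i'(1)\in(0,1)$ and $G_i''(1)<\infty$, such that $\lim_{n}\rho_n=1$, $\sum_{n=1}^\infty(1-\rho_n)=\infty$, and $\lim_n G_n''(1)/(1-\rho_n)=0$. With $\rho_{[j,n]}=\rho_{j+1}\cdots\rho_n$, $\vartheta_{i,n}=\big(1-G_i(1-\rho_{[i,n]})\big)/\rho_{[i,n]}$ and $\vartheta_{[j,n]}=\vartheta_{j+1,n}\cdots\vartheta_{n,n}$ (empty products $=1$), one has $$\lim_{n\to\infty}\sum_{j=1}^n(1-\rho_j)\vartheta_{[j,n]}=1.$$ *)

theory Defs
  imports "HOL-Probability.Probability"
begin

definition pgf :: "nat pmf \<Rightarrow> real \<Rightarrow> real" where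
  "pgf p s = (\<Sum>k. pmf p k * s ^ k)"

text \<open>G'(1) (left derivative at 1) = E[X]; G''(1) = E[X(X-1)] (factorial moments).\<close>
definition pgf_d1 :: "nat pmf \<Rightarrow> real" where
  "pgf_d1 p = (\<Sum>k. real k * pmf p k)"

definition pgf_d2 :: "nat pmf \<Rightarrow> real" where
  "pgf_d2 p = (\<Sum>k. real k * (real k - 1) * pmf p k)"

definition rho_prod :: "(nat \<Rightarrow> real) \<Rightarrow> nat \<Rightarrow> nat \<Rightarrow> real" where
  "rho_prod \<rho> j n = (\<Prod>k\<in>{j+1..n}. \<rho> k)"

definition theta :: "(nat \<Rightarrow> nat pmf) \<Rightarrow> (nat \<Rightarrow> real) \<Rightarrow> nat \<Rightarrow> nat \<Rightarrow> real" where
  "theta P \<rho> i n = (1 - pgf (P i) (1 - rho_prod \<rho> i n)) / rho_prod \<rho> i n"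

definition theta_prod :: "(nat \<Rightarrow> nat pmf) \<Rightarrow> (nat \<Rightarrow> real) \<Rightarrow> nat \<Rightarrow> nat \<Rightarrow> real" where
  "theta_prod P \<rho> j n = (\<Prod>i\<in>{j+1..n}. theta P \<rho> i n)"

end

theory Submission
  imports Defs
begin

(* Write rho_[j,n] for the products of the rho_k and
   T_n = sum_j (1 - rho_j) rho_[j,n].  This sum telescopes to 1 - rho_[0,n], and
   rho_[0,n] -> 0 because sum (1 - rho_n) diverges, so T_n -> 1.
   A second-order Taylor bound for the generating functions gives
   rho_i (1 - eps_i rho_[i,n]) <= theta_{i,n} <= rho_i with eps_i = G_i''(1) / (2 rho_i).
   Multiplying these bounds (Weierstrass' product inequality) squeezes the target sum
   S_n between T_n (1 - E_n) and T_n, where E_n = sum_i eps_i rho_[i,n].  Since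
   eps_i = o(1 - rho_i), a Toeplitz-type argument shows E_n -> 0, and S_n -> 1 follows. *)

lemma pmf_sums_one: "pmf (p :: nat pmf) sums 1"
  using sums_infsetsum_nat'[OF pmf_abs_summable[of p UNIV]] infsetsum_pmf_eq_1[of p UNIV] by simp

lemma one_minus_power_lower:
  fixes r :: real assumes "r \<le> 1"
  shows "1 - real k * r \<le> (1 - r) ^ k"
  using Bernoulli_inequality[of "- r" k] assms by simp

lemma one_minus_power_upper:
  fixes r :: real assumes r: "0 \<le> r" "r \<le> 1"
  shows "(1 - r) ^ k \<le> 1 - real k * r + real k * (real k - 1) / 2 * r\<^sup>2"
proof (induction k)
  case 0 then show ?case by simp
next
  case (Suc k)
  have "(1 - r) ^ Suc k \<le> (1 - r) * (1 - real k * r + real k * (real k - 1) / 2 * r\<^sup>2)"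
    using Suc r by (simp add: mult_left_mono)
  also have "\<dots> = 1 - real (Suc k) * r + real (Suc k) * (real (Suc k) - 1) / 2 * r\<^sup>2
                   - real k * (real k - 1) / 2 * r ^ 3"
    by (simp add: field_simps power2_eq_square power3_eq_cube)
  also have "\<dots> \<le> 1 - real (Suc k) * r + real (Suc k) * (real (Suc k) - 1) / 2 * r\<^sup>2"
    using r by (cases k) auto
  finally show ?case .
qed

lemma one_minus_pgf_sums:
  fixes r :: real assumes r: "0 \<le> r" "r \<le> 1"
  shows "(\<lambda>k. pmf p k * (1 - (1 - r) ^ k)) sums (1 - pgf p (1 - r))"
proof -
  have "summable (\<lambda>k. pmf p k * (1 - r) ^ k)"
    using r by (intro summable_comparison_test'[OF sums_summable[OF pmf_sums_one[of p]], of 0])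
      (auto simp: abs_mult intro!: mult_left_le power_le_one)
  then have "(\<lambda>k. pmf p k - pmf p k * (1 - r) ^ k) sums (1 - pgf p (1 - r))"
    unfolding pgf_def by (intro sums_diff pmf_sums_one summable_sums)
  then show ?thesis by (simp add: right_diff_distrib)
qed

lemma pgf_d2_nonneg:
  assumes "summable (\<lambda>k. real k * (real k - 1) * pmf p k)"
  shows "0 \<le> pgf_d2 p"
  unfolding pgf_d2_def
proof (rule suminf_nonneg[OF assms])
  show "0 \<le> real k * (real k - 1) * pmf p k" for k by (cases k) auto
qed

(* Termwise Bernoulli: 1 - G(1 - r) <= G'(1) r. *)
lemma one_minus_pgf_upper:
  fixes r :: real
  assumes mean: "summable (\<lambda>k. real k * pmf p k)" and r: "0 \<le> r" "r \<le> 1"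
  shows "1 - pgf p (1 - r) \<le> pgf_d1 p * r"
  unfolding pgf_d1_def
proof (rule sums_le[OF _ one_minus_pgf_sums[OF r] sums_mult2[OF summable_sums[OF mean]]])
  show "pmf p k * (1 - (1 - r) ^ k) \<le> real k * pmf p k * r" for k
    using mult_left_mono[OF one_minus_power_lower[OF r(2), of k], of "pmf p k"]
    by (simp add: algebra_simps)
qed

(* Termwise second-order bound: 1 - G(1 - r) >= G'(1) r - G''(1) r^2 / 2. *)
lemma one_minus_pgf_lower:
  fixes r :: real
  assumes mean: "summable (\<lambda>k. real k * pmf p k)"
    and fact2: "summable (\<lambda>k. real k * (real k - 1) * pmf p k)"
    and r: "0 \<le> r" "r \<le> 1"
  shows "pgf_d1 p * r - pgf_d2 p / 2 * r\<^sup>2 \<le> 1 - pgf p (1 - r)"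
proof -
  have "(\<lambda>k. real k * pmf p k * r - real k * (real k - 1) * pmf p k / 2 * r\<^sup>2)
          sums (pgf_d1 p * r - pgf_d2 p / 2 * r\<^sup>2)"
    unfolding pgf_d1_def pgf_d2_def
    by (intro sums_diff sums_mult2 sums_divide summable_sums mean fact2)
  then show ?thesis
  proof (rule sums_le[OF _ _ one_minus_pgf_sums[OF r], rotated])
    show "real k * pmf p k * r - real k * (real k - 1) * pmf p k / 2 * r\<^sup>2
            \<le> pmf p k * (1 - (1 - r) ^ k)" for k
      using mult_left_mono[OF one_minus_power_upper[OF r, of k], of "pmf p k"]
      by (simp add: algebra_simps)
  qed
qed

lemma pgf_difference_quotient_bounds:
  fixes r :: real
  assumes mean: "summable (\<lambda>k. real k * pmf p k)"
    and fact2: "summable (\<lambda>k. real k * (real k - 1) * pmf p k)"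
    and r: "0 < r" "r \<le> 1"
  shows "pgf_d1 p - pgf_d2 p / 2 * r \<le> (1 - pgf p (1 - r)) / r"
    and "(1 - pgf p (1 - r)) / r \<le> pgf_d1 p"
proof -
  have "(pgf_d1 p - pgf_d2 p / 2 * r) * r \<le> 1 - pgf p (1 - r)"
    using one_minus_pgf_lower[OF mean fact2, of r] r by (simp add: algebra_simps power2_eq_square)
  then show "pgf_d1 p - pgf_d2 p / 2 * r \<le> (1 - pgf p (1 - r)) / r"
    by (subst pos_le_divide_eq[OF r(1)])
  show "(1 - pgf p (1 - r)) / r \<le> pgf_d1 p"
    using one_minus_pgf_upper[OF mean, of r] r by (simp add: pos_divide_le_eq)
qed

lemma theta_bounds:
  assumes rho_i: "\<rho> i = pgf_d1 (P i)" "0 < \<rho> i"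
    and mean: "summable (\<lambda>k. real k * pmf (P i) k)"
    and fact2: "summable (\<lambda>k. real k * (real k - 1) * pmf (P i) k)"
    and r: "0 < rho_prod \<rho> i n" "rho_prod \<rho> i n \<le> 1"
  shows "\<rho> i * (1 - pgf_d2 (P i) / (2 * \<rho> i) * rho_prod \<rho> i n) \<le> theta P \<rho> i n"
    and "theta P \<rho> i n \<le> \<rho> i"
proof -
  note bounds = pgf_difference_quotient_bounds[OF mean fact2 r]
  have "\<rho> i * (1 - pgf_d2 (P i) / (2 * \<rho> i) * rho_prod \<rho> i n)
          = pgf_d1 (P i) - pgf_d2 (P i) / 2 * rho_prod \<rho> i n"
    using rho_i by (simp add: field_simps)
  then show "\<rho> i * (1 - pgf_d2 (P i) / (2 * \<rho> i) * rho_prod \<rho> i n) \<le> theta P \<rho> i n"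
    using bounds(1) by (simp add: theta_def)
  show "theta P \<rho> i n \<le> \<rho> i"
    using bounds(2) rho_i by (simp add: theta_def)
qed

lemma rho_prod_self: "rho_prod \<rho> n n = 1"
  by (simp add: rho_prod_def)

lemma rho_prod_Suc: "j \<le> n \<Longrightarrow> rho_prod \<rho> j (Suc n) = rho_prod \<rho> j n * \<rho> (Suc n)"
  unfolding rho_prod_def by (subst prod.cl_ivl_Suc) auto

lemma rho_prod_split:
  assumes "j \<le> i" "i \<le> n"
  shows "rho_prod \<rho> j n = rho_prod \<rho> j i * rho_prod \<rho> i n"
  using assms(2)
proof (induction n rule: dec_induct)
  case base then show ?case by (simp add: rho_prod_self)
next
  case (step m) then show ?case using assms(1) by (simp add: rho_prod_Suc)
qed

lemma rho_weights_telescope: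
  "(\<Sum>j=1..n. (1 - \<rho> j) * rho_prod \<rho> j n) = 1 - rho_prod \<rho> 0 n"
proof (induction n)
  case 0 then show ?case by (simp add: rho_prod_def)
next
  case (Suc n)
  have "(\<Sum>j=1..Suc n. (1 - \<rho> j) * rho_prod \<rho> j (Suc n))
          = (\<Sum>j=1..n. (1 - \<rho> j) * rho_prod \<rho> j (Suc n)) + (1 - \<rho> (Suc n))"
    by (simp add: rho_prod_self)
  also have "\<dots> = (\<Sum>j=1..n. (1 - \<rho> j) * rho_prod \<rho> j n) * \<rho> (Suc n) + (1 - \<rho> (Suc n))"
    by (simp add: rho_prod_Suc sum_distrib_right mult.assoc)
  also have "\<dots> = 1 - rho_prod \<rho> 0 (Suc n)"
    unfolding Suc.IH by (simp add: rho_prod_Suc algebra_simps)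
  finally show ?case .
qed

lemma product_sandwich:
  fixes \<rho> \<theta> u :: "'a \<Rightarrow> real"
  assumes "finite A"
    and bounds: "\<And>i. i \<in> A \<Longrightarrow> \<rho> i * (1 - u i) \<le> \<theta> i \<and> \<theta> i \<le> \<rho> i"
    and nonneg: "\<And>i. i \<in> A \<Longrightarrow> 0 \<le> \<rho> i \<and> 0 \<le> u i"
    and small: "sum u A \<le> 1"
  shows "(\<Prod>i\<in>A. \<rho> i) * (1 - sum u A) \<le> (\<Prod>i\<in>A. \<theta> i)"
    and "(\<Prod>i\<in>A. \<theta> i) \<le> (\<Prod>i\<in>A. \<rho> i)"
proof -
  have u_le_one: "u i \<le> 1" if "i \<in> A" for i
    using member_le_sum[of i A u] nonneg small that \<open>finite A\<close> by force
  have lower_nonneg: "0 \<le> \<rho> i * (1 - u i)" if "i \<in> A" for i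
    using nonneg[OF that] u_le_one[OF that] by simp
  have "(\<Prod>i\<in>A. \<rho> i) * (1 - sum u A) \<le> (\<Prod>i\<in>A. \<rho> i) * (\<Prod>i\<in>A. 1 - u i)"
    using Weierstrass_prod_ineq[of A u] nonneg u_le_one
    by (intro mult_left_mono prod_nonneg) auto
  also have "\<dots> = (\<Prod>i\<in>A. \<rho> i * (1 - u i))"
    by (simp add: prod.distrib)
  also have "\<dots> \<le> (\<Prod>i\<in>A. \<theta> i)"
    using bounds lower_nonneg by (intro prod_mono) auto
  finally show "(\<Prod>i\<in>A. \<rho> i) * (1 - sum u A) \<le> (\<Prod>i\<in>A. \<theta> i)" .
  show "(\<Prod>i\<in>A. \<theta> i) \<le> (\<Prod>i\<in>A. \<rho> i)"
    using bounds lower_nonneg by (intro prod_mono) (blast intro: order_trans)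
qed

locale subunit_factors =
  fixes \<rho> :: "nat \<Rightarrow> real"
  assumes rho_range: "\<And>k. 1 \<le> k \<Longrightarrow> 0 < \<rho> k \<and> \<rho> k \<le> 1"
begin

lemma rho_prod_pos: "0 < rho_prod \<rho> j n"
  unfolding rho_prod_def using rho_range by (intro prod_pos) auto

lemma rho_prod_le_one: "rho_prod \<rho> j n \<le> 1"
  unfolding rho_prod_def using rho_range by (intro prod_le_1) (auto intro: less_imp_le)

lemma rho_weights_partial_le_one:
  assumes "A \<subseteq> {1..n}"
  shows "(\<Sum>j\<in>A. (1 - \<rho> j) * rho_prod \<rho> j n) \<le> 1"
proof -
  have "(\<Sum>j\<in>A. (1 - \<rho> j) * rho_prod \<rho> j n) \<le> (\<Sum>j=1..n. (1 - \<rho> j) * rho_prod \<rho> j n)"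
  proof (rule sum_mono2[OF _ assms])
    show "0 \<le> (1 - \<rho> j) * rho_prod \<rho> j n" if "j \<in> {1..n} - A" for j
      using that rho_range[of j] rho_prod_pos[of j n] by simp
  qed simp
  also have "\<dots> \<le> 1"
    using rho_weights_telescope[of \<rho> n] rho_prod_pos[of 0 n] by simp
  finally show ?thesis .
qed

(* If sum (1 - rho_n) diverges then rho_[0,n] -> 0, via rho <= exp (rho - 1). *)
lemma rho_prod_tendsto_zero:
  assumes div: "filterlim (\<lambda>N. \<Sum>n=1..N. 1 - \<rho> n) at_top sequentially"
  shows "(\<lambda>n. rho_prod \<rho> 0 n) \<longlonglongrightarrow> 0"
proof (rule tendsto_sandwich[OF _ _ tendsto_const])
  show "\<forall>\<^sub>F n in sequentially. 0 \<le> rho_prod \<rho> 0 n"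
    by (simp add: less_imp_le rho_prod_pos)
  have "rho_prod \<rho> 0 N \<le> exp (- (\<Sum>n=1..N. 1 - \<rho> n))" for N
  proof -
    have "rho_prod \<rho> 0 N = (\<Prod>k\<in>{1..N}. \<rho> k)" by (simp add: rho_prod_def)
    also have "\<dots> \<le> (\<Prod>k\<in>{1..N}. exp (\<rho> k - 1))"
      using rho_range exp_ge_add_one_self[of "\<rho> _ - 1"] by (intro prod_mono) (auto intro: less_imp_le)
    also have "\<dots> = exp (- (\<Sum>n=1..N. 1 - \<rho> n))"
      by (simp add: exp_sum[symmetric] sum_negf[symmetric])
    finally show ?thesis .
  qed
  then show "\<forall>\<^sub>F n in sequentially. rho_prod \<rho> 0 n \<le> exp (- (\<Sum>k=1..n. 1 - \<rho> k))"
    by simp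
  show "(\<lambda>N. exp (- (\<Sum>n=1..N. 1 - \<rho> n))) \<longlonglongrightarrow> 0"
    using filterlim_compose[OF exp_at_bot filterlim_compose[OF filterlim_uminus_at_bot_at_top div]]
    by (simp add: o_def)
qed

lemma rho_weights_tendsto_one:
  assumes div: "filterlim (\<lambda>N. \<Sum>n=1..N. 1 - \<rho> n) at_top sequentially"
  shows "(\<lambda>n. \<Sum>j=1..n. (1 - \<rho> j) * rho_prod \<rho> j n) \<longlonglongrightarrow> 1"
  unfolding rho_weights_telescope
  using tendsto_diff[OF tendsto_const[of 1] rho_prod_tendsto_zero[OF div]] by simp

(* A Toeplitz-type lemma: if e_i = o(1 - rho_i) then sum_{i<=n} e_i rho_[i,n] -> 0.
   Split at N: the tail is at most delta/2 times a partial weight sum <= 1, the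
   head is a fixed multiple of rho_[0,n] -> 0. *)
lemma weighted_sum_vanishes:
  fixes e :: "nat \<Rightarrow> real"
  assumes div: "filterlim (\<lambda>N. \<Sum>n=1..N. 1 - \<rho> n) at_top sequentially"
    and rho_lt1: "\<And>k. 1 \<le> k \<Longrightarrow> \<rho> k < 1"
    and e_nonneg: "\<And>i. 1 \<le> i \<Longrightarrow> 0 \<le> e i"
    and ratio: "(\<lambda>i. e i / (1 - \<rho> i)) \<longlonglongrightarrow> 0"
  shows "(\<lambda>n. \<Sum>i=1..n. e i * rho_prod \<rho> i n) \<longlonglongrightarrow> 0"
proof (rule order_tendstoI)
  show "\<forall>\<^sub>F n in sequentially. a < (\<Sum>i=1..n. e i * rho_prod \<rho> i n)" if "a < 0" for a
    using that e_nonneg rho_prod_pos[THEN less_imp_le]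
    by (intro always_eventually allI order.strict_trans2[OF that] sum_nonneg) auto
next
  fix \<delta> :: real assume "0 < \<delta>"
  have "\<forall>\<^sub>F i in sequentially. e i / (1 - \<rho> i) < \<delta> / 2 \<and> 1 \<le> i"
    using \<open>0 < \<delta>\<close> by (intro eventually_conj order_tendstoD(2)[OF ratio] eventually_ge_at_top) simp
  then obtain N where N: "\<And>i. N \<le> i \<Longrightarrow> e i / (1 - \<rho> i) < \<delta> / 2 \<and> 1 \<le> i"
    by (auto simp: eventually_sequentially)
  have tail: "e i \<le> \<delta> / 2 * (1 - \<rho> i)" if "N \<le> i" for i
    using N[OF that] rho_lt1[of i] by (simp add: divide_less_eq mult.commute less_imp_le)
  define K where "K = (\<Sum>i\<in>{1..<N}. e i / rho_prod \<rho> 0 i)"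
  have head_small: "\<forall>\<^sub>F n in sequentially. K * rho_prod \<rho> 0 n < \<delta> / 2"
    using tendsto_mult_right_zero[OF rho_prod_tendsto_zero[OF div], of K] \<open>0 < \<delta>\<close>
    by (intro order_tendstoD(2)) auto
  have split_bound: "(\<Sum>i=1..n. e i * rho_prod \<rho> i n) \<le> K * rho_prod \<rho> 0 n + \<delta> / 2"
    if "N \<le> n" for n
  proof -
    have split: "{1..n} = {1..<N} \<union> {N..n}" using N[OF order_refl] that by auto
    have "(\<Sum>i=1..n. e i * rho_prod \<rho> i n)
          = (\<Sum>i\<in>{1..<N}. e i * rho_prod \<rho> i n) + (\<Sum>i=N..n. e i * rho_prod \<rho> i n)"
      unfolding split by (rule sum.union_disjoint) auto
    also have "(\<Sum>i\<in>{1..<N}. e i * rho_prod \<rho> i n) = K * rho_prod \<rho> 0 n"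
      unfolding K_def sum_distrib_right
    proof (rule sum.cong[OF refl])
      fix i assume "i \<in> {1..<N}"
      then have "rho_prod \<rho> 0 n = rho_prod \<rho> 0 i * rho_prod \<rho> i n"
        using that by (intro rho_prod_split) auto
      then show "e i * rho_prod \<rho> i n = e i / rho_prod \<rho> 0 i * rho_prod \<rho> 0 n"
        using rho_prod_pos[of 0 i] by simp
    qed
    also have "(\<Sum>i=N..n. e i * rho_prod \<rho> i n) \<le> \<delta> / 2 * (\<Sum>i=N..n. (1 - \<rho> i) * rho_prod \<rho> i n)"
      unfolding sum_distrib_left using tail rho_prod_pos
      by (intro sum_mono) (auto simp: mult.assoc[symmetric] intro: mult_right_mono less_imp_le)
    also have "\<dots> \<le> \<delta> / 2"
      using rho_weights_partial_le_one[of "{N..n}" n] N[OF order_refl] \<open>0 < \<delta>\<close>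
      by (intro mult_left_le) auto
    finally show ?thesis by simp
  qed
  show "\<forall>\<^sub>F n in sequentially. (\<Sum>i=1..n. e i * rho_prod \<rho> i n) < \<delta>"
    using head_small eventually_ge_at_top[of N]
    by eventually_elim (use split_bound in fastforce)
qed

lemma weighted_sum_sandwich:
  fixes \<theta> u :: "nat \<Rightarrow> real"
  assumes bounds: "\<And>i. i \<in> {1..n} \<Longrightarrow> \<rho> i * (1 - u i) \<le> \<theta> i \<and> \<theta> i \<le> \<rho> i"
    and u_nonneg: "\<And>i. i \<in> {1..n} \<Longrightarrow> 0 \<le> u i"
    and u_small: "sum u {1..n} \<le> 1"
  defines "T \<equiv> \<Sum>j=1..n. (1 - \<rho> j) * rho_prod \<rho> j n"
    and "S \<equiv> \<Sum>j=1..n. (1 - \<rho> j) * (\<Prod>i\<in>{j+1..n}. \<theta> i)"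
  shows "T * (1 - sum u {1..n}) \<le> S" and "S \<le> T"
proof -
  have factor: "rho_prod \<rho> j n * (1 - sum u {1..n}) \<le> (\<Prod>i\<in>{j+1..n}. \<theta> i)
                \<and> (\<Prod>i\<in>{j+1..n}. \<theta> i) \<le> rho_prod \<rho> j n" if "j \<in> {1..n}" for j
  proof -
    have sub: "{j+1..n} \<subseteq> {1..n}" using that by auto
    have sum_le: "sum u {j+1..n} \<le> sum u {1..n}"
      using sub u_nonneg by (intro sum_mono2) auto
    have factor_bounds: "\<rho> i * (1 - u i) \<le> \<theta> i \<and> \<theta> i \<le> \<rho> i"
      and factor_nonneg: "0 \<le> \<rho> i \<and> 0 \<le> u i" if "i \<in> {j+1..n}" for i
      using that sub bounds u_nonneg rho_range[of i] by auto
    have "sum u {j+1..n} \<le> 1" using sum_le u_small by linarith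
    note product_sandwich[OF finite_atLeastAtMost factor_bounds factor_nonneg this]
    moreover have "rho_prod \<rho> j n * (1 - sum u {1..n}) \<le> rho_prod \<rho> j n * (1 - sum u {j+1..n})"
      using sum_le rho_prod_pos[of j n] by (intro mult_left_mono) auto
    ultimately show ?thesis unfolding rho_prod_def by linarith
  qed
  have weight_nonneg: "0 \<le> 1 - \<rho> j" if "j \<in> {1..n}" for j
    using rho_range[of j] that by auto
  show "T * (1 - sum u {1..n}) \<le> S"
    unfolding T_def S_def sum_distrib_right mult.assoc
    using factor weight_nonneg by (intro sum_mono mult_left_mono) auto
  show "S \<le> T"
    unfolding T_def S_def
    using factor weight_nonneg by (intro sum_mono mult_left_mono) auto
qed

end

lemma halved_ratio_tendsto_zero:
  fixes d \<rho> :: "nat \<Rightarrow> real"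
  assumes "(\<lambda>i. d i / (1 - \<rho> i)) \<longlonglongrightarrow> 0" and "\<rho> \<longlonglongrightarrow> 1"
  shows "(\<lambda>i. d i / (2 * \<rho> i) / (1 - \<rho> i)) \<longlonglongrightarrow> 0"
proof -
  have "(\<lambda>i. d i / (1 - \<rho> i) / (2 * \<rho> i)) \<longlonglongrightarrow> 0 / (2 * 1)"
    using assms by (intro tendsto_intros) simp_all
  then show ?thesis by (simp add: divide_divide_eq_left mult.commute)
qed

theorem mainTheorem8:
  fixes P :: "nat \<Rightarrow> nat pmf" and \<rho> :: "nat \<Rightarrow> real"
  assumes rho_def: "\<And>i. i \<ge> 1 \<Longrightarrow> \<rho> i = pgf_d1 (P i)"
    and mean_fin: "\<And>i. i \<ge> 1 \<Longrightarrow> summable (\<lambda>k. real k * pmf (P i) k)"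
    and rho_pos: "\<And>i. i \<ge> 1 \<Longrightarrow> 0 < \<rho> i"
    and rho_lt1: "\<And>i. i \<ge> 1 \<Longrightarrow> \<rho> i < 1"
    and d2_fin: "\<And>i. i \<ge> 1 \<Longrightarrow> summable (\<lambda>k. real k * (real k - 1) * pmf (P i) k)"
    and rho_lim: "\<rho> \<longlonglongrightarrow> 1"
    and div: "filterlim (\<lambda>N. \<Sum>n=1..N. 1 - \<rho> n) at_top sequentially"
    and d2_lim: "(\<lambda>n. pgf_d2 (P n) / (1 - \<rho> n)) \<longlonglongrightarrow> 0"
  shows "(\<lambda>n. \<Sum>j=1..n. (1 - \<rho> j) * theta_prod P \<rho> j n) \<longlonglongrightarrow> 1"
proof -
  interpret subunit_factors \<rho>
    using rho_pos rho_lt1 by unfold_locales (auto intro: less_imp_le)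
  define \<epsilon> where "\<epsilon> i = pgf_d2 (P i) / (2 * \<rho> i)" for i
  define E where "E n = (\<Sum>i=1..n. \<epsilon> i * rho_prod \<rho> i n)" for n
  define T where "T n = (\<Sum>j=1..n. (1 - \<rho> j) * rho_prod \<rho> j n)" for n
  define S where "S n = (\<Sum>j=1..n. (1 - \<rho> j) * theta_prod P \<rho> j n)" for n
  have eps_nonneg: "0 \<le> \<epsilon> i" if "1 \<le> i" for i
    unfolding \<epsilon>_def using pgf_d2_nonneg[OF d2_fin[OF that]] rho_pos[OF that] by simp
  have theta_between: "\<rho> i * (1 - \<epsilon> i * rho_prod \<rho> i n) \<le> theta P \<rho> i n \<and> theta P \<rho> i n \<le> \<rho> i"
    if "1 \<le> i" for i n
    using theta_bounds[where \<rho> = \<rho> and P = P and i = i and n = n,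
        OF rho_def[OF that] rho_pos[OF that] mean_fin[OF that] d2_fin[OF that]
        rho_prod_pos rho_prod_le_one]
    unfolding \<epsilon>_def by simp
  have ratio: "(\<lambda>i. \<epsilon> i / (1 - \<rho> i)) \<longlonglongrightarrow> 0"
    unfolding \<epsilon>_def using d2_lim rho_lim by (rule halved_ratio_tendsto_zero)
  have E_lim: "E \<longlonglongrightarrow> 0"
    unfolding E_def by (rule weighted_sum_vanishes[OF div rho_lt1 eps_nonneg ratio])
  have T_lim: "T \<longlonglongrightarrow> 1"
    unfolding T_def by (rule rho_weights_tendsto_one[OF div])
  have bounds: "T n * (1 - E n) \<le> S n \<and> S n \<le> T n" if "E n \<le> 1" for n
  proof -
    have "\<rho> i * (1 - \<epsilon> i * rho_prod \<rho> i n) \<le> theta P \<rho> i n \<and> theta P \<rho> i n \<le> \<rho> i"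
      and "0 \<le> \<epsilon> i * rho_prod \<rho> i n" if "i \<in> {1..n}" for i
      using theta_between eps_nonneg rho_prod_pos[of i n] that by simp_all
    from weighted_sum_sandwich[where n = n and u = "\<lambda>i. \<epsilon> i * rho_prod \<rho> i n"
        and \<theta> = "\<lambda>i. theta P \<rho> i n", OF this]
    show ?thesis
      using \<open>E n \<le> 1\<close> unfolding T_def S_def E_def theta_prod_def by simp
  qed
  have "\<forall>\<^sub>F n in sequentially. E n < 1"
    using E_lim by (rule order_tendstoD) simp
  then have lower: "\<forall>\<^sub>F n in sequentially. T n * (1 - E n) \<le> S n"
    and upper: "\<forall>\<^sub>F n in sequentially. S n \<le> T n"
    using bounds by (auto elim: eventually_mono)
  have "(\<lambda>n. T n * (1 - E n)) \<longlonglongrightarrow> 1 * (1 - 0)"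
    by (intro tendsto_intros T_lim E_lim)
  then have "S \<longlonglongrightarrow> 1"
    using tendsto_sandwich[OF lower upper _ T_lim] by simp
  then show ?thesis unfolding S_def .
qed

end
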